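(* Let $m,n,w,d$ be positive integers with $w\le m$. For any positive integer $a$, $$A(am,n,w,d)\ge C\left(a,n,\left\lceil\frac{d}{w}\right\rceil\right)A(m,n,w,d).$$ Furthermore, if $a$ divides $w$ and $d\le nw\frac{a-1}{a}$, then $$A(am,n,w,d)\ge C\left(a,n,\left\lceil\frac{d}{w}\right\rceil\right)A(m,n,w,d)+A\left(m,an,\frac{w}{a},d\right).$$
   Context: $J(m,w)$ denotes the set of binary vectors of length $m$ and Hamming weight $w$. Elements of $J(m,w)^n$ are identified with $m\times n$ binary matrices all of whose columns have weight $w$, with binary Hamming distance. $A(m,n,w,d)$ is the maximum cardinality of a nonempty subset of $J(m,w)^n$ with pairwise Hamming distances at least $2d$. $C(q,n,d)$ is the maximum cardinality of a nonempty subset of $[q]^n$, $[q]=\{0,\dots,q-1\}$, with pairwise Hamming distances (number of differing coordinates) at least $d$. *)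

theory Defs
  imports Complex_Main
begin

text \<open>Elements of J(m,w)^n, identified with m x n binary matrices all of whose
columns have weight w. A matrix is a function x :: nat => nat => bool where x i j is
the entry in row i < m and column j < n; entries outside the range are False
(so the set is finite and each matrix has a unique representative).\<close>
definition Jmat :: "nat \<Rightarrow> nat \<Rightarrow> nat \<Rightarrow> (nat \<Rightarrow> nat \<Rightarrow> bool) set" where
  "Jmat m n w = {x. (\<forall>i j. x i j \<longrightarrow> i < m \<and> j < n) \<and>
                    (\<forall>j<n. card {i. i < m \<and> x i j} = w)}"

definition bdist :: "nat \<Rightarrow> nat \<Rightarrow> (nat \<Rightarrow> nat \<Rightarrow> bool) \<Rightarrow> (nat \<Rightarrow> nat \<Rightarrow> bool) \<Rightarrow> nat" where
  "bdist m n x y = card {(i, j). i < m \<and> j < n \<and> x i j \<noteq> y i j}"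

definition A_code :: "nat \<Rightarrow> nat \<Rightarrow> nat \<Rightarrow> nat \<Rightarrow> nat" where
  "A_code m n w d = Max {card S | S. S \<subseteq> Jmat m n w \<and> S \<noteq> {} \<and>
      (\<forall>x\<in>S. \<forall>y\<in>S. x \<noteq> y \<longrightarrow> 2 * d \<le> bdist m n x y)}"

definition qwords :: "nat \<Rightarrow> nat \<Rightarrow> (nat \<Rightarrow> nat) set" where
  "qwords q n = {x. (\<forall>j<n. x j < q) \<and> (\<forall>j\<ge>n. x j = 0)}"

definition hdist :: "nat \<Rightarrow> (nat \<Rightarrow> nat) \<Rightarrow> (nat \<Rightarrow> nat) \<Rightarrow> nat" where
  "hdist n x y = card {j. j < n \<and> x j \<noteq> y j}"

definition C_code :: "nat \<Rightarrow> nat \<Rightarrow> nat \<Rightarrow> nat" where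
  "C_code q n d = Max {card S | S. S \<subseteq> qwords q n \<and> S \<noteq> {} \<and>
      (\<forall>x\<in>S. \<forall>y\<in>S. x \<noteq> y \<longrightarrow> d \<le> hdist n x y)}"

end

theory Submission
  imports Defs
begin

text \<open>Split the am rows into a blocks of m rows. For a word c of [a]^n and x in J(m,w)^n,
place column j of x into block c j. Placed matrices with the same c are exactly as far apart
as the x's; where c and c' differ, the two placed columns have disjoint supports, so the
distance is at least 2w d_H(c,c') \<ge> 2w\<lceil>d/w\<rceil> \<ge> 2d.
If w = at, a code in J(m,t)^(an) yields further codewords by stacking its a groups of n columns
on top of each other. A stacked column has only t ones in each block, so it shares at most t
ones with a placed column, which puts the two codes at distance at least 2n(at - t) \<ge> 2d.\<close>

definition cw_code :: "nat \<Rightarrow> nat \<Rightarrow> nat \<Rightarrow> nat \<Rightarrow> (nat \<Rightarrow> nat \<Rightarrow> bool) set \<Rightarrow> bool" where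
  "cw_code m n w d S \<longleftrightarrow>
     S \<subseteq> Jmat m n w \<and> S \<noteq> {} \<and> (\<forall>x\<in>S. \<forall>y\<in>S. x \<noteq> y \<longrightarrow> 2 * d \<le> bdist m n x y)"

definition qary_code :: "nat \<Rightarrow> nat \<Rightarrow> nat \<Rightarrow> (nat \<Rightarrow> nat) set \<Rightarrow> bool" where
  "qary_code q n d S \<longleftrightarrow>
     S \<subseteq> qwords q n \<and> S \<noteq> {} \<and> (\<forall>x\<in>S. \<forall>y\<in>S. x \<noteq> y \<longrightarrow> d \<le> hdist n x y)"

definition place :: "nat \<Rightarrow> (nat \<Rightarrow> nat) \<Rightarrow> (nat \<Rightarrow> nat \<Rightarrow> bool) \<Rightarrow> nat \<Rightarrow> nat \<Rightarrow> bool" where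
  "place m c x = (\<lambda>i j. i div m = c j \<and> x (i mod m) j)"

definition place_code ::
    "nat \<Rightarrow> (nat \<Rightarrow> nat) set \<Rightarrow> (nat \<Rightarrow> nat \<Rightarrow> bool) set \<Rightarrow> (nat \<Rightarrow> nat \<Rightarrow> bool) set" where
  "place_code m E D = case_prod (place m) ` (E \<times> D)"

definition stack :: "nat \<Rightarrow> nat \<Rightarrow> (nat \<Rightarrow> nat \<Rightarrow> bool) \<Rightarrow> nat \<Rightarrow> nat \<Rightarrow> bool" where
  "stack m n y = (\<lambda>i j. j < n \<and> y (i mod m) (i div m * n + j))"


lemma card_le_Max_card:
  assumes "P S" "finite U" "\<And>S. P S \<Longrightarrow> S \<subseteq> U"
  shows "card S \<le> Max {card S | S. P S}"
proof (rule Max_ge)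
  show "finite {card S | S. P S}"
    by (rule finite_subset[of _ "{..card U}"]) (use assms in \<open>auto intro: card_mono\<close>)
qed (use assms(1) in blast)

lemma Max_card_attained:
  assumes "P S\<^sub>0" "finite U" "\<And>S. P S \<Longrightarrow> S \<subseteq> U"
  shows "\<exists>S. P S \<and> card S = Max {card S | S. P S}"
proof -
  have "finite {card S | S. P S}"
    by (rule finite_subset[of _ "{..card U}"]) (use assms in \<open>auto intro: card_mono\<close>)
  moreover have "{card S | S. P S} \<noteq> {}" using assms(1) by blast
  ultimately have "Max {card S | S. P S} \<in> {card S | S. P S}" by (rule Max_in)
  then show ?thesis by force
qed

lemma finite_Jmat: "finite (Jmat m n w)"
proof -
  have "(\<lambda>x. {(i, j). x i j}) ` Jmat m n w \<subseteq> Pow ({..<m} \<times> {..<n})"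
    by (auto simp: Jmat_def)
  then have "finite ((\<lambda>x. {(i, j). x i j}) ` Jmat m n w)"
    by (rule finite_subset) auto
  moreover have "inj_on (\<lambda>x. {(i, j). x i j}) (Jmat m n w)"
    by (auto simp: inj_on_def fun_eq_iff)
  ultimately show ?thesis by (blast dest: finite_imageD)
qed

lemma finite_qwords: "finite (qwords q n)"
proof -
  have "(\<lambda>x. map x [0..<n]) ` qwords q n \<subseteq> {xs. set xs \<subseteq> {..<q} \<and> length xs = n}"
    by (auto simp: qwords_def)
  then have "finite ((\<lambda>x. map x [0..<n]) ` qwords q n)"
    by (rule finite_subset) (simp add: finite_lists_length_eq)
  moreover have "inj_on (\<lambda>x. map x [0..<n]) (qwords q n)"
  proof (rule inj_onI, rule ext)
    fix x y j assume "x \<in> qwords q n" "y \<in> qwords q n" "map x [0..<n] = map y [0..<n]"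
    then show "x j = y j"
      by (cases "j < n") (metis add_0 diff_zero nth_map_upt, simp add: qwords_def)
  qed
  ultimately show ?thesis by (blast dest: finite_imageD)
qed

lemma A_code_eq_Max: "A_code m n w d = Max {card S | S. cw_code m n w d S}"
  by (simp add: A_code_def cw_code_def)

lemma C_code_eq_Max: "C_code q n d = Max {card S | S. qary_code q n d S}"
  by (simp add: C_code_def qary_code_def)

lemma card_le_A_code: "cw_code m n w d S \<Longrightarrow> card S \<le> A_code m n w d"
  unfolding A_code_eq_Max
  by (rule card_le_Max_card[OF _ finite_Jmat]) (auto simp: cw_code_def)

lemma A_code_attained:
  assumes "w \<le> m"
  shows "\<exists>S. cw_code m n w d S \<and> card S = A_code m n w d"
proof -
  have "{i. i < m \<and> i < w} = {..<w}" using assms by auto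
  then have "(\<lambda>i j. i < w \<and> j < n) \<in> Jmat m n w" using assms by (auto simp: Jmat_def)
  then have "cw_code m n w d {\<lambda>i j. i < w \<and> j < n}" by (simp add: cw_code_def)
  then show ?thesis
    unfolding A_code_eq_Max by (rule Max_card_attained[OF _ finite_Jmat]) (auto simp: cw_code_def)
qed

lemma C_code_attained:
  assumes "0 < q"
  shows "\<exists>S. qary_code q n d S \<and> card S = C_code q n d"
proof -
  have "qary_code q n d {\<lambda>j. 0}" using assms by (simp add: qary_code_def qwords_def)
  then show ?thesis
    unfolding C_code_eq_Max by (rule Max_card_attained[OF _ finite_qwords]) (auto simp: qary_code_def)
qed


lemma bdist_self [simp]: "bdist m n x x = 0"
  by (simp add: bdist_def)

lemma bdist_commute: "bdist m n x y = bdist m n y x"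
  unfolding bdist_def by (metis (no_types, lifting))

lemma bdist_eq_sum_columns: "bdist m n x y = (\<Sum>j<n. card {i. i < m \<and> x i j \<noteq> y i j})"
proof -
  let ?P = "\<lambda>i j. x i j \<noteq> y i j"
  have "{(i, j). i < m \<and> j < n \<and> ?P i j} = prod.swap ` (SIGMA j:{..<n}. {i. i < m \<and> ?P i j})"
    by force
  moreover have "card (prod.swap ` (SIGMA j:{..<n}. {i. i < m \<and> ?P i j}))
      = (\<Sum>j<n. card {i. i < m \<and> ?P i j})"
    by (simp add: card_image)
  ultimately show ?thesis by (simp add: bdist_def)
qed

lemma sum_le_bdist:
  assumes "J \<subseteq> {..<n}" "\<And>j. j \<in> J \<Longrightarrow> f j \<le> card {i. i < m \<and> x i j \<noteq> y i j}"
  shows "sum f J \<le> bdist m n x y"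
proof -
  have "sum f J \<le> (\<Sum>j\<in>J. card {i. i < m \<and> x i j \<noteq> y i j})" by (rule sum_mono) (fact assms(2))
  also have "\<dots> \<le> (\<Sum>j<n. card {i. i < m \<and> x i j \<noteq> y i j})" by (rule sum_mono2) (use assms(1) in auto)
  finally show ?thesis by (simp add: bdist_eq_sum_columns)
qed

lemma card_disagreements_ge:
  fixes m :: nat
  assumes "card {i. i < m \<and> P i} = p" "card {i. i < m \<and> Q i} = q"
    and "card {i. i < m \<and> P i \<and> Q i} \<le> k"
  shows "p + q - 2 * k \<le> card {i. i < m \<and> P i \<noteq> Q i}"
proof -
  let ?A = "{i. i < m \<and> P i}" and ?B = "{i. i < m \<and> Q i}" and ?I = "{i. i < m \<and> P i \<and> Q i}"
  have fin: "finite ?A" "finite ?B" by simp_all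
  have "{i. i < m \<and> P i \<noteq> Q i} = (?A - ?I) \<union> (?B - ?I)" by blast
  moreover have "card ((?A - ?I) \<union> (?B - ?I)) = card (?A - ?I) + card (?B - ?I)"
    by (rule card_Un_disjoint) (use fin in auto)
  moreover have "card (?A - ?I) = p - card ?I" "card (?B - ?I) = q - card ?I"
    using assms(1,2) fin by (subst card_Diff_subset; auto)+
  ultimately show ?thesis using assms(3) by simp
qed

lemma card_rows_in_block:
  fixes m :: nat
  assumes "0 < m" "b < a"
  shows "card {i. i < a * m \<and> i div m = b \<and> P (i mod m)} = card {i. i < m \<and> P i}"
proof -
  have "{i. i < a * m \<and> i div m = b \<and> P (i mod m)} = (\<lambda>i. b * m + i) ` {i. i < m \<and> P i}"
  proof (intro equalityI subsetI)
    fix i assume "i \<in> {i. i < a * m \<and> i div m = b \<and> P (i mod m)}"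
    then show "i \<in> (\<lambda>i. b * m + i) ` {i. i < m \<and> P i}"
      using \<open>0 < m\<close> by (auto intro!: image_eqI[of _ _ "i mod m"] simp: div_mult_mod_eq)
  next
    fix i assume "i \<in> (\<lambda>i. b * m + i) ` {i. i < m \<and> P i}"
    moreover have "b * m + k < a * m" if "k < m" for k
      using \<open>b < a\<close> that mult_le_mono1[of "Suc b" a m] by simp
    ultimately show "i \<in> {i. i < a * m \<and> i div m = b \<and> P (i mod m)}" by auto
  qed
  then show ?thesis by (simp add: card_image)
qed


lemma card_place_column:
  assumes "0 < m" "c \<in> qwords a n" "j < n" "x \<in> Jmat m n w"
  shows "card {i. i < a * m \<and> place m c x i j} = w"
  using card_rows_in_block[of m "c j" a "\<lambda>i. x i j"] assms by (simp add: place_def qwords_def Jmat_def)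

lemma place_in_Jmat:
  assumes "0 < m" "c \<in> qwords a n" "x \<in> Jmat m n w"
  shows "place m c x \<in> Jmat (a * m) n w"
proof -
  have "i < a * m \<and> j < n" if "place m c x i j" for i j
  proof -
    have "j < n" "i div m < a" using that assms(2,3) by (auto simp: place_def qwords_def Jmat_def)
    then show ?thesis using div_less_iff_less_mult[OF assms(1)] by simp
  qed
  then show ?thesis using card_place_column[OF assms(1,2) _ assms(3)] by (auto simp: Jmat_def)
qed

lemma bdist_place_same:
  assumes "0 < m" "c \<in> qwords a n"
  shows "bdist (a * m) n (place m c x) (place m c x') = bdist m n x x'"
  unfolding bdist_eq_sum_columns
proof (rule sum.cong[OF refl])
  fix j assume "j \<in> {..<n}"
  have "{i. i < a * m \<and> place m c x i j \<noteq> place m c x' i j}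
      = {i. i < a * m \<and> i div m = c j \<and> x (i mod m) j \<noteq> x' (i mod m) j}"
    by (auto simp: place_def)
  then show "card {i. i < a * m \<and> place m c x i j \<noteq> place m c x' i j}
      = card {i. i < m \<and> x i j \<noteq> x' i j}"
    using card_rows_in_block[of m "c j" a "\<lambda>i. x i j \<noteq> x' i j"] assms \<open>j \<in> {..<n}\<close>
    by (simp add: qwords_def)
qed

lemma bdist_place_ge:
  assumes "0 < m" "c \<in> qwords a n" "c' \<in> qwords a n" "x \<in> Jmat m n w" "x' \<in> Jmat m n w"
  shows "2 * w * hdist n c c' \<le> bdist (a * m) n (place m c x) (place m c' x')"
proof -
  have "(\<Sum>j\<in>{j. j < n \<and> c j \<noteq> c' j}. 2 * w) \<le> bdist (a * m) n (place m c x) (place m c' x')"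
  proof (rule sum_le_bdist)
    fix j assume "j \<in> {j. j < n \<and> c j \<noteq> c' j}"
    then have "j < n" and "card {i. i < a * m \<and> place m c x i j \<and> place m c' x' i j} \<le> 0"
      by (auto simp: place_def)
    from card_disagreements_ge[OF card_place_column[OF assms(1,2) \<open>j < n\<close> assms(4)]
        card_place_column[OF assms(1,3) \<open>j < n\<close> assms(5)] this(2)]
    show "2 * w \<le> card {i. i < a * m \<and> place m c x i j \<noteq> place m c' x' i j}"
      by simp
  qed auto
  then show ?thesis by (simp add: hdist_def mult.commute)
qed


lemma card_stack_block_column:
  assumes "0 < m" "b < a" "j < n" "y \<in> Jmat m (a * n) t"
  shows "card {i. i < a * m \<and> i div m = b \<and> stack m n y i j} = t"
proof -
  have "{i. i < a * m \<and> i div m = b \<and> stack m n y i j}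
      = {i. i < a * m \<and> i div m = b \<and> y (i mod m) (b * n + j)}"
    using assms(3) unfolding stack_def by blast
  moreover have "b * n + j < a * n"
    using assms(2,3) mult_le_mono1[of "Suc b" a n] by simp
  then have "card {i. i < m \<and> y i (b * n + j)} = t"
    using assms(4) by (simp add: Jmat_def)
  ultimately show ?thesis
    using card_rows_in_block[of m b a "\<lambda>i. y i (b * n + j)"] assms(1,2) by simp
qed

lemma card_stack_column:
  assumes "0 < m" "j < n" "y \<in> Jmat m (a * n) t"
  shows "card {i. i < a * m \<and> stack m n y i j} = a * t"
proof -
  have "{i. i < a * m \<and> stack m n y i j} = (\<Union>b<a. {i. i < a * m \<and> i div m = b \<and> stack m n y i j})"
    using div_less_iff_less_mult[OF assms(1)] by blast
  moreover have "card (\<Union>b<a. {i. i < a * m \<and> i div m = b \<and> stack m n y i j})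
      = (\<Sum>b<a. card {i. i < a * m \<and> i div m = b \<and> stack m n y i j})"
    by (rule card_UN_disjoint) auto
  moreover have "(\<Sum>b<a. card {i. i < a * m \<and> i div m = b \<and> stack m n y i j}) = a * t"
    using card_stack_block_column[OF assms(1) _ assms(2,3)] by simp
  ultimately show ?thesis by simp
qed

lemma stack_in_Jmat:
  assumes "0 < m" "y \<in> Jmat m (a * n) t"
  shows "stack m n y \<in> Jmat (a * m) n (a * t)"
proof -
  have "i < a * m \<and> j < n" if "stack m n y i j" for i j
  proof -
    have "j < n" and "i div m * n + j < a * n"
      using that assms(2) unfolding stack_def Jmat_def by blast+
    then have "i div m < a" by (meson add_lessD1 mult_less_cancel2)
    then show ?thesis using \<open>j < n\<close> div_less_iff_less_mult[OF assms(1)] by simp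
  qed
  moreover have "\<forall>j<n. card {i. i < a * m \<and> stack m n y i j} = a * t"
    using card_stack_column[OF assms(1) _ assms(2)] by blast
  ultimately show ?thesis unfolding Jmat_def by blast
qed

lemma bdist_stack_ge:
  assumes "0 < m" "0 < n"
  shows "bdist m (a * n) y y' \<le> bdist (a * m) n (stack m n y) (stack m n y')"
  unfolding bdist_def
proof (rule card_inj_on_le)
  let ?f = "\<lambda>(i, j). (j div n * m + i, j mod n)"
  show "inj_on ?f {(i, j). i < m \<and> j < a * n \<and> y i j \<noteq> y' i j}"
  proof (rule inj_onI, clarsimp)
    fix i j i' j'
    assume "i < m" "i' < m" and eq: "j div n * m + i = j' div n * m + i'" "j mod n = j' mod n"
    have "(j div n * m + i) div m = (j' div n * m + i') div m"
      "(j div n * m + i) mod m = (j' div n * m + i') mod m"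
      using eq(1) by simp_all
    then have "j div n = j' div n" "i = i'" using \<open>i < m\<close> \<open>i' < m\<close> by simp_all
    then show "i = i' \<and> j = j'" using eq(2) by (metis div_mult_mod_eq)
  qed
  show "?f ` {(i, j). i < m \<and> j < a * n \<and> y i j \<noteq> y' i j}
      \<subseteq> {(i, j). i < a * m \<and> j < n \<and> stack m n y i j \<noteq> stack m n y' i j}"
  proof clarify
    fix i j assume "i < m" "j < a * n" "y i j \<noteq> y' i j"
    moreover have "j div n < a" using \<open>j < a * n\<close> assms(2) by (simp add: div_less_iff_less_mult)
    moreover have "j div n * m + i < a * m"
      using \<open>j div n < a\<close> \<open>i < m\<close> mult_le_mono1[of "Suc (j div n)" a m] by simp
    ultimately show "j div n * m + i < a * m \<and> j mod n < n \<and>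
        stack m n y (j div n * m + i) (j mod n) \<noteq> stack m n y' (j div n * m + i) (j mod n)"
      using assms by (simp add: stack_def div_mult_mod_eq)
  qed
qed (auto intro: finite_subset[of _ "{..<a * m} \<times> {..<n}"])

lemma bdist_place_stack_ge:
  assumes "0 < m" "c \<in> qwords a n" "x \<in> Jmat m n (a * t)" "y \<in> Jmat m (a * n) t"
  shows "2 * (n * t * (a - 1)) \<le> bdist (a * m) n (place m c x) (stack m n y)"
proof -
  have "(\<Sum>j<n. 2 * (t * (a - 1))) \<le> bdist (a * m) n (place m c x) (stack m n y)"
  proof (rule sum_le_bdist)
    fix j assume "j \<in> {..<n}"
    then have j: "j < n" and cj: "c j < a" using assms(2) by (auto simp: qwords_def)
    have "card {i. i < a * m \<and> place m c x i j \<and> stack m n y i j}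
        \<le> card {i. i < a * m \<and> i div m = c j \<and> stack m n y i j}"
      by (rule card_mono) (auto simp: place_def)
    also have "\<dots> = t" by (rule card_stack_block_column[OF assms(1) cj j assms(4)])
    finally have "a * t + a * t - 2 * t \<le> card {i. i < a * m \<and> place m c x i j \<noteq> stack m n y i j}"
      by (rule card_disagreements_ge[OF card_place_column[OF assms(1,2) j assms(3)]
            card_stack_column[OF assms(1) j assms(4)]])
    moreover have "a * t + a * t - 2 * t = 2 * (t * (a - 1))"
      by (simp add: diff_mult_distrib2 mult.commute)
    ultimately show "2 * (t * (a - 1)) \<le> card {i. i < a * m \<and> place m c x i j \<noteq> stack m n y i j}"
      by simp
  qed simp
  then show ?thesis by simp
qed

lemma bdist_place_code_stack_ge:
  assumes "0 < m" "E \<subseteq> qwords a n" "D \<subseteq> Jmat m n (a * t)" "Y \<subseteq> Jmat m (a * n) t"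
    and "z \<in> place_code m E D" "u \<in> stack m n ` Y"
  shows "2 * (n * t * (a - 1)) \<le> bdist (a * m) n z u"
proof -
  obtain c x y where "c \<in> E" "x \<in> D" "y \<in> Y" and zu: "z = place m c x" "u = stack m n y"
    using assms(5,6) unfolding place_code_def by auto
  then show ?thesis
    unfolding zu using assms(2-4) by (intro bdist_place_stack_ge[OF assms(1)]) auto
qed

lemma cw_code_image:
  assumes "0 < d" "S \<noteq> {}" "f ` S \<subseteq> Jmat m n w"
    and sep: "\<And>x y. x \<in> S \<Longrightarrow> y \<in> S \<Longrightarrow> x \<noteq> y \<Longrightarrow> 2 * d \<le> bdist m n (f x) (f y)"
  shows "cw_code m n w d (f ` S)" "card (f ` S) = card S"
proof -
  have "inj_on f S"
    by (rule inj_onI, rule ccontr) (use sep \<open>0 < d\<close> in fastforce)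
  then show "card (f ` S) = card S" by (rule card_image)
  show "cw_code m n w d (f ` S)"
    using assms by (auto simp: cw_code_def)
qed

lemma cw_code_Un:
  assumes "0 < d" "cw_code m n w d S" "cw_code m n w d T"
    and cross: "\<And>x y. x \<in> S \<Longrightarrow> y \<in> T \<Longrightarrow> 2 * d \<le> bdist m n x y"
  shows "cw_code m n w d (S \<union> T)" "card (S \<union> T) = card S + card T"
proof -
  have "S \<inter> T = {}" using cross \<open>0 < d\<close> by fastforce
  moreover have "finite S" "finite T"
    using assms(2,3) by (auto simp: cw_code_def intro: finite_subset[OF _ finite_Jmat])
  ultimately show "card (S \<union> T) = card S + card T" by (simp add: card_Un_disjoint)
  show "cw_code m n w d (S \<union> T)"
    using assms(2,3) cross bdist_commute unfolding cw_code_def by (metis Un_iff Un_empty Un_subset_iff)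
qed

lemma cw_code_place:
  assumes "0 < m" "0 < d" "qary_code a n k E" "cw_code m n w d D" "d \<le> w * k"
  shows "cw_code (a * m) n w d (place_code m E D)" "card (place_code m E D) = card E * card D"
  unfolding place_code_def
proof -
  have E: "E \<subseteq> qwords a n" "E \<noteq> {}" "\<forall>c\<in>E. \<forall>c'\<in>E. c \<noteq> c' \<longrightarrow> k \<le> hdist n c c'"
    and D: "D \<subseteq> Jmat m n w" "D \<noteq> {}" "\<forall>x\<in>D. \<forall>x'\<in>D. x \<noteq> x' \<longrightarrow> 2 * d \<le> bdist m n x x'"
    using assms(3,4) by (auto simp: qary_code_def cw_code_def)
  have sep: "2 * d \<le> bdist (a * m) n (case_prod (place m) p) (case_prod (place m) q)"
    if in_ED: "p \<in> E \<times> D" "q \<in> E \<times> D" and "p \<noteq> q" for p q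
  proof -
    obtain c x c' x' where pq: "p = (c, x)" "q = (c', x')"
      and cx: "c \<in> E" "x \<in> D" "c' \<in> E" "x' \<in> D"
      using in_ED by (metis mem_Sigma_iff prod.collapse)
    show ?thesis
    proof (cases "c = c'")
      case True
      then show ?thesis using that pq cx D(3) E(1) bdist_place_same[OF assms(1)] by auto
    next
      case False
      then have "2 * d \<le> 2 * w * hdist n c c'"
        using cx E(3) assms(5) by (metis mult.assoc mult_le_mono2 order_trans)
      also have "\<dots> \<le> bdist (a * m) n (place m c x) (place m c' x')"
        using cx E(1) D(1) by (intro bdist_place_ge[OF assms(1)]) auto
      finally show ?thesis using pq by simp
    qed
  qed
  have "case_prod (place m) ` (E \<times> D) \<subseteq> Jmat (a * m) n w"
    using E(1) D(1) by (auto intro!: place_in_Jmat[OF assms(1)])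
  moreover have "E \<times> D \<noteq> {}" using E(2) D(2) by simp
  ultimately show "cw_code (a * m) n w d (case_prod (place m) ` (E \<times> D))"
    "card (case_prod (place m) ` (E \<times> D)) = card E * card D"
    using cw_code_image[of d "E \<times> D" "case_prod (place m)", OF assms(2) _ _ sep]
    by (simp_all add: card_cartesian_product)
qed

lemma cw_code_stack:
  assumes "0 < m" "0 < n" "0 < d" "cw_code m (a * n) t d Y"
  shows "cw_code (a * m) n (a * t) d (stack m n ` Y)" "card (stack m n ` Y) = card Y"
proof -
  have sep: "2 * d \<le> bdist (a * m) n (stack m n y) (stack m n y')"
    if "y \<in> Y" "y' \<in> Y" "y \<noteq> y'" for y y'
  proof -
    have "2 * d \<le> bdist m (a * n) y y'" using that assms(4) unfolding cw_code_def by blast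
    also have "\<dots> \<le> bdist (a * m) n (stack m n y) (stack m n y')" by (rule bdist_stack_ge[OF assms(1,2)])
    finally show ?thesis .
  qed
  have "stack m n ` Y \<subseteq> Jmat (a * m) n (a * t)"
    using assms(4) stack_in_Jmat[OF assms(1)] unfolding cw_code_def by blast
  moreover have "Y \<noteq> {}" using assms(4) by (simp add: cw_code_def)
  ultimately show "cw_code (a * m) n (a * t) d (stack m n ` Y)" "card (stack m n ` Y) = card Y"
    using cw_code_image[of d Y "stack m n", OF assms(3) _ _ sep] by simp_all
qed


lemma card_place_code_add_A_code_le:
  assumes "0 < m" "0 < n" "0 < d" "t \<le> m" "d \<le> n * t * (a - 1)"
    and "qary_code a n k E" "cw_code m n (a * t) d D" "cw_code (a * m) n (a * t) d (place_code m E D)"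
  shows "card (place_code m E D) + A_code m (a * n) t d \<le> A_code (a * m) n (a * t) d"
proof -
  obtain Y where Y: "cw_code m (a * n) t d Y" "card Y = A_code m (a * n) t d"
    using A_code_attained[OF \<open>t \<le> m\<close>] by blast
  note S = cw_code_stack[OF \<open>0 < m\<close> \<open>0 < n\<close> \<open>0 < d\<close> Y(1)]
  have "E \<subseteq> qwords a n" "D \<subseteq> Jmat m n (a * t)" "Y \<subseteq> Jmat m (a * n) t"
    using assms(6,7) Y(1) unfolding cw_code_def qary_code_def by blast+
  note cross = bdist_place_code_stack_ge[OF \<open>0 < m\<close> this]
  have "2 * d \<le> bdist (a * m) n z u" if "z \<in> place_code m E D" "u \<in> stack m n ` Y" for z u
    using cross[OF that] \<open>d \<le> n * t * (a - 1)\<close> by linarith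
  note PS = cw_code_Un[OF \<open>0 < d\<close> assms(8) S(1) this]
  show ?thesis using card_le_A_code[OF PS(1)] PS(2) S(2) Y(2) by simp
qed

lemma le_mult_nat_ceiling_divide: "0 < w \<Longrightarrow> d \<le> w * nat \<lceil>real d / real w\<rceil>"
proof -
  assume "0 < w"
  have "real d / real w \<le> real (nat \<lceil>real d / real w\<rceil>)" by linarith
  then have "real d \<le> real (nat \<lceil>real d / real w\<rceil>) * real w"
    using \<open>0 < w\<close> by (metis pos_divide_le_eq of_nat_0_less_iff)
  then show ?thesis by (metis of_nat_le_iff of_nat_mult mult.commute)
qed

lemma le_of_real_bound_dvd:
  assumes "a * t = w" "0 < a" "real d \<le> real n * real w * (real a - 1) / real a"
  shows "d \<le> n * t * (a - 1)"
proof -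
  have "real n * real w * (real a - 1) / real a = real (n * t * (a - 1))"
    using assms(1,2) by auto
  then show ?thesis using assms(3) by linarith
qed


theorem proposition8:
  fixes m n w d a :: nat
  assumes "0 < m" "0 < n" "0 < w" "0 < d" "w \<le> m" "0 < a"
  shows "A_code (a * m) n w d \<ge>
           C_code a n (nat \<lceil>real d / real w\<rceil>) * A_code m n w d \<and>
         (a dvd w \<and> real d \<le> real n * real w * (real a - 1) / real a \<longrightarrow>
         A_code (a * m) n w d \<ge>
           C_code a n (nat \<lceil>real d / real w\<rceil>) * A_code m n w d
           + A_code m (a * n) (w div a) d)"
proof -
  define k where "k = nat \<lceil>real d / real w\<rceil>"
  obtain D where D: "cw_code m n w d D" "card D = A_code m n w d"
    using A_code_attained[OF \<open>w \<le> m\<close>] by blast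
  obtain E where E: "qary_code a n k E" "card E = C_code a n k"
    using C_code_attained[OF \<open>0 < a\<close>] by blast
  have "d \<le> w * k" unfolding k_def by (rule le_mult_nat_ceiling_divide[OF \<open>0 < w\<close>])
  note P = cw_code_place[OF \<open>0 < m\<close> \<open>0 < d\<close> E(1) D(1) this]
  have "card (place_code m E D) + A_code m (a * n) (w div a) d \<le> A_code (a * m) n w d"
    if "a dvd w" "real d \<le> real n * real w * (real a - 1) / real a"
  proof -
    obtain t where t: "a * t = w" using \<open>a dvd w\<close> by (metis dvd_def)
    moreover have "t \<le> a * t" using \<open>0 < a\<close> by simp
    ultimately have "w div a = t" "t \<le> m" using \<open>0 < a\<close> \<open>w \<le> m\<close> by auto
    with card_place_code_add_A_code_le[OF \<open>0 < m\<close> \<open>0 < n\<close> \<open>0 < d\<close> _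
        le_of_real_bound_dvd[OF t \<open>0 < a\<close> \<open>real d \<le> _\<close>] E(1), of D] D(1) P(1) t
    show ?thesis by simp
  qed
  then show ?thesis using card_le_A_code[OF P(1)] P(2) D(2) E(2) unfolding k_def by simp
qed

end
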